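(* Let $X$ be a real Banach space, $J=\{1,\ldots,l\}$, $g_j\colon X\to\mathbb{R}$, $M=\{x\in X\mid g_j(x)\le0\ \forall j\in J\}$, $\overline{x}\in M$ and $J(\overline{x})=\{j\in J\mid g_j(\overline{x})=0\}$. Suppose that the functions $g_j$, $j\in J(\overline{x})$, are quasidifferentiable at $\overline{x}$ (with given quasidifferentials) and the functions $g_j$, $j\notin J(\overline{x})$, are upper semicontinuous at $\overline{x}$. Let $z_j^*\in\overline{\partial} g_j(\overline{x})$, $j\in J(\overline{x})$, be such that $0\notin\operatorname{co}\{\underline{\partial} g_j(\overline{x})+z_j^*\mid j\in J(\overline{x})\}$. Then $$\Big\{v\in X\Bigm| s(\underline{\partial} g_j(\overline{x})+z_j^*,v)\le0,\ j\in J(\overline{x})\Big\}\subseteq T_M(\overline{x}).$$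
   Context: $X^*$ is the dual with pairing $\langle\cdot,\cdot\rangle$. $g$ is quasidifferentiable at $x$ if $g'(x,v)=\lim_{\alpha\to+0}(g(x+\alpha v)-g(x))/\alpha$ exists finitely for all $v$ and there is a pair $[\underline{\partial} g(x),\overline{\partial} g(x)]$ of convex weak$^*$ compact subsets of $X^*$ with $g'(x,v)=\max_{x^*\in\underline{\partial} g(x)}\langle x^*,v\rangle+\min_{y^*\in\overline{\partial} g(x)}\langle y^*,v\rangle$ for all $v$; a specific one is fixed. $s(C,v)=\sup_{x^*\in C}\langle x^*,v\rangle$; $\operatorname{co}$ is the convex hull of the union of the listed sets. $T_M(x)$ is the contingent cone: all $v$ such that there exist $\alpha_n\to+0$, $v_n\to v$ with $x+\alpha_nv_n\in M$. *)

theory Defs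
  imports "HOL-Analysis.Analysis"
begin

definition weak_star_topology :: "('a::real_normed_vector \<Rightarrow>\<^sub>L real) topology" where
  "weak_star_topology =
     pullback_topology UNIV (\<lambda>f v. blinfun_apply f v) (product_topology (\<lambda>_. euclideanreal) UNIV)"

definition weak_star_compact :: "('a::real_normed_vector \<Rightarrow>\<^sub>L real) set \<Rightarrow> bool" where
  "weak_star_compact C \<longleftrightarrow> compactin weak_star_topology C"

definition has_dir_deriv :: "('a::real_normed_vector \<Rightarrow> real) \<Rightarrow> 'a \<Rightarrow> 'a \<Rightarrow> real \<Rightarrow> bool" where
  "has_dir_deriv g x v d \<longleftrightarrow> ((\<lambda>\<alpha>. (g (x + \<alpha> *\<^sub>R v) - g x) / \<alpha>) \<longlongrightarrow> d) (at_right 0)"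

text \<open>g is quasidifferentiable at x with quasidifferential [Dl, Du]:
  g'(x,v) = max_{x*\<in>Dl} x*(v) + min_{y*\<in>Du} y*(v).\<close>
definition quasidifferentiable_with ::
  "('a::real_normed_vector \<Rightarrow> real) \<Rightarrow> 'a \<Rightarrow> ('a \<Rightarrow>\<^sub>L real) set \<Rightarrow> ('a \<Rightarrow>\<^sub>L real) set \<Rightarrow> bool" where
  "quasidifferentiable_with g x Dl Du \<longleftrightarrow>
     convex Dl \<and> convex Du \<and> weak_star_compact Dl \<and> weak_star_compact Du \<and>
     (\<forall>v. \<exists>d a b. has_dir_deriv g x v d \<and> a \<in> Dl \<and> b \<in> Du \<and>
          (\<forall>a'\<in>Dl. blinfun_apply a' v \<le> blinfun_apply a v) \<and> (\<forall>b'\<in>Du. blinfun_apply b v \<le> blinfun_apply b' v) \<and> d = blinfun_apply a v + blinfun_apply b v)"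

definition upper_semicontinuous_at :: "('a::topological_space \<Rightarrow> real) \<Rightarrow> 'a \<Rightarrow> bool" where
  "upper_semicontinuous_at g x \<longleftrightarrow> (\<forall>e>0. \<forall>\<^sub>F y in at x. g y < g x + e)"

definition support_fun :: "('a::real_normed_vector \<Rightarrow>\<^sub>L real) set \<Rightarrow> 'a \<Rightarrow> real" where
  "support_fun C v = (SUP c\<in>C. blinfun_apply c v)"

definition contingent_cone :: "'a::real_normed_vector set \<Rightarrow> 'a \<Rightarrow> 'a set" where
  "contingent_cone M x = {v. \<exists>\<alpha> vs. (\<forall>n. \<alpha> n > 0) \<and> \<alpha> \<longlonglongrightarrow> 0 \<and> vs \<longlonglongrightarrow> v \<and>
                                    (\<forall>n. x + \<alpha> n *\<^sub>R vs n \<in> M)}"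

end

theory Submission
  imports Defs
begin

text \<open>The convex hull K of the shifted lower quasidifferentials is weak* compact and misses 0,
  so some v0 makes every c \<in> K strictly negative: by compactness finitely many evaluations
  c \<mapsto> c v already keep K away from 0, and v0 comes from the point of K whose evaluation
  vector is nearest to 0. For v in the linearized cone, each direction v + v0/(n+1) gives every
  active constraint a negative directional derivative (the minimum over the upper quasidifferential
  is at most the value at z j), so these directions are feasible for small steps; they tend to v.\<close>

lemma topspace_weak_star_topology [simp]: "topspace weak_star_topology = UNIV"
  by (simp add: weak_star_topology_def topspace_pullback_topology)

lemma continuous_map_weak_star_evaluation:
  "continuous_map weak_star_topology euclideanreal (\<lambda>f. blinfun_apply f v)"
proof -
  have "continuous_map weak_star_topology euclideanreal ((\<lambda>h. h v) \<circ> (\<lambda>f v. blinfun_apply f v))"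
    unfolding weak_star_topology_def
    by (rule continuous_map_pullback)
       (rule continuous_map_product_projection[where X="\<lambda>_. euclideanreal", simplified], simp)
  then show ?thesis by (simp add: o_def)
qed

lemma continuous_map_into_weak_star_topology:
  assumes "\<And>v. continuous_map T euclideanreal (\<lambda>x. blinfun_apply (h x) v)"
  shows "continuous_map T weak_star_topology h"
  unfolding weak_star_topology_def
  by (rule continuous_map_pullback') (auto simp: o_def continuous_map_componentwise_UNIV assms)

lemma weak_star_compact_translation:
  assumes "weak_star_compact D"
  shows "weak_star_compact ((\<lambda>a. a + z) ` D)"
proof -
  have "continuous_map weak_star_topology weak_star_topology (\<lambda>a. a + z)"
    by (rule continuous_map_into_weak_star_topology)
       (auto simp: blinfun.add_left intro!: continuous_map_add continuous_map_weak_star_evaluation)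
  then show ?thesis
    using assms image_compactin unfolding weak_star_compact_def by blast
qed

lemma compactin_simplex_coefficients:
  assumes "finite A"
  shows "compactin (product_topology (\<lambda>_. euclideanreal) A)
           {c \<in> A \<rightarrow>\<^sub>E {0..1::real}. sum c A = 1}"
proof -
  let ?T = "product_topology (\<lambda>_. euclideanreal) A"
  have "closedin ?T {c \<in> topspace ?T. sum c A \<in> {1::real}}"
    by (rule closedin_continuous_map_preimage)
       (auto intro!: continuous_map_sum assms continuous_map_product_projection)
  then have "compactin ?T ((A \<rightarrow>\<^sub>E {0..1}) \<inter> {c \<in> topspace ?T. sum c A \<in> {1::real}})"
    by (intro compact_Int_closedin) (simp add: compactin_PiE)
  moreover have "(A \<rightarrow>\<^sub>E {0..1}) \<inter> {c \<in> topspace ?T. sum c A \<in> {1::real}}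
                   = {c \<in> A \<rightarrow>\<^sub>E {0..1::real}. sum c A = 1}"
    by (auto simp: PiE_def Pi_def)
  ultimately show ?thesis by simp
qed

lemma convex_hull_finite_Union_eq_image:
  fixes C :: "'i \<Rightarrow> 'a::real_vector set"
  assumes "finite A" and "\<And>j. j \<in> A \<Longrightarrow> convex (C j) \<and> C j \<noteq> {}"
  shows "convex hull (\<Union>j\<in>A. C j) =
           (\<lambda>(c, s). \<Sum>i\<in>A. c i *\<^sub>R s i) ` ({c \<in> A \<rightarrow>\<^sub>E {0..1}. sum c A = 1} \<times> Pi\<^sub>E A C)"
    (is "_ = ?F ` ?S")
proof -
  have "convex hull (\<Union>j\<in>A. C j) =
      {\<Sum>i\<in>A. c i *\<^sub>R s i | c s. (\<forall>i\<in>A. c i \<ge> 0) \<and> sum c A = 1 \<and> (\<forall>i\<in>A. s i \<in> C i)}"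
    by (rule convex_hull_finite_union) (use assms in auto)
  also have "\<dots> = ?F ` ?S"
  proof (intro equalityI subsetI)
    fix x assume "x \<in> {\<Sum>i\<in>A. c i *\<^sub>R s i | c s. (\<forall>i\<in>A. c i \<ge> 0) \<and> sum c A = 1 \<and> (\<forall>i\<in>A. s i \<in> C i)}"
    then obtain c s where x: "x = (\<Sum>i\<in>A. c i *\<^sub>R s i)"
      and c: "\<forall>i\<in>A. c i \<ge> 0" "sum c A = 1" and s: "\<forall>i\<in>A. s i \<in> C i"
      by blast
    have "c i \<le> 1" if "i \<in> A" for i
      using member_le_sum[of i A c] c that assms(1) by auto
    then have "(restrict c A, restrict s A) \<in> ?S"
      using c s by auto
    moreover have "x = ?F (restrict c A, restrict s A)"
      by (simp add: x)
    ultimately show "x \<in> ?F ` ?S" by blast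
  qed (auto simp: PiE_def Pi_def)
  finally show ?thesis .
qed

lemma compactin_weak_star_convex_hull_finite_Union:
  fixes C :: "'i \<Rightarrow> ('a::real_normed_vector \<Rightarrow>\<^sub>L real) set"
  assumes A: "finite A"
    and C: "\<And>j. j \<in> A \<Longrightarrow> convex (C j) \<and> C j \<noteq> {} \<and> compactin weak_star_topology (C j)"
  shows "compactin weak_star_topology (convex hull (\<Union>j\<in>A. C j))"
proof -
  define P where "P = prod_topology (product_topology (\<lambda>_. euclideanreal) A)
                        (product_topology (\<lambda>_. weak_star_topology :: ('a \<Rightarrow>\<^sub>L real) topology) A)"
  define F where "F = (\<lambda>(c, s). \<Sum>i\<in>A. c i *\<^sub>R s i :: 'a \<Rightarrow>\<^sub>L real)"
  have "compactin P ({c \<in> A \<rightarrow>\<^sub>E {0..1}. sum c A = 1} \<times> Pi\<^sub>E A C)"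
    unfolding P_def using compactin_simplex_coefficients[OF A] C
    by (simp add: compactin_Times compactin_PiE)
  moreover have "continuous_map P weak_star_topology F"
  proof (rule continuous_map_into_weak_star_topology)
    fix v
    have "continuous_map P euclideanreal (\<lambda>x. \<Sum>i\<in>A. fst x i * blinfun_apply (snd x i) v)"
    proof (intro continuous_map_sum A continuous_map_real_mult)
      fix i assume i: "i \<in> A"
      have "continuous_map P euclideanreal ((\<lambda>c. c i) \<circ> fst)"
        unfolding P_def
        by (rule continuous_map_compose[OF continuous_map_fst continuous_map_product_projection[OF i]])
      then show "continuous_map P euclideanreal (\<lambda>x. fst x i)" by (simp add: o_def)
      have "continuous_map P euclideanreal ((\<lambda>f. blinfun_apply f v) \<circ> (\<lambda>s. s i) \<circ> snd)"
        unfolding P_def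
        by (intro continuous_map_compose[OF continuous_map_snd]
            continuous_map_compose[OF continuous_map_product_projection[OF i]]
            continuous_map_weak_star_evaluation)
      then show "continuous_map P euclideanreal (\<lambda>x. blinfun_apply (snd x i) v)" by (simp add: o_def)
    qed
    then show "continuous_map P euclideanreal (\<lambda>x. blinfun_apply (F x) v)"
      by (simp add: F_def case_prod_unfold blinfun.sum_left blinfun.scaleR_left)
  qed
  moreover have "convex hull (\<Union>j\<in>A. C j) = F ` ({c \<in> A \<rightarrow>\<^sub>E {0..1}. sum c A = 1} \<times> Pi\<^sub>E A C)"
    unfolding F_def using C by (intro convex_hull_finite_Union_eq_image A) auto
  ultimately show ?thesis
    by (simp add: image_compactin)
qed

lemma compactin_weak_star_finite_nonvanishing:
  fixes K :: "('a::real_normed_vector \<Rightarrow>\<^sub>L real) set"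
  assumes K: "compactin weak_star_topology K" and "0 \<notin> K"
  obtains V where "finite V" "\<And>c. c \<in> K \<Longrightarrow> \<exists>v\<in>V. blinfun_apply c v \<noteq> 0"
proof -
  define U where "U v = {c :: 'a \<Rightarrow>\<^sub>L real. blinfun_apply c v \<noteq> 0}" for v
  have "openin weak_star_topology (U v)" for v
  proof -
    have "openin weak_star_topology {c \<in> topspace weak_star_topology. blinfun_apply c v \<in> - {0}}"
      by (rule openin_continuous_map_preimage[OF continuous_map_weak_star_evaluation]) auto
    then show ?thesis by (simp add: U_def)
  qed
  moreover have "K \<subseteq> \<Union>(range U)"
  proof
    fix c assume "c \<in> K"
    then have "c \<noteq> 0" using \<open>0 \<notin> K\<close> by auto
    then obtain v where "blinfun_apply c v \<noteq> 0" using blinfun_eqI[of c 0] by auto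
    then show "c \<in> \<Union>(range U)" by (auto simp: U_def)
  qed
  ultimately obtain \<F> where "finite \<F>" "\<F> \<subseteq> range U" "K \<subseteq> \<Union>\<F>"
    using K unfolding compactin_def by (metis imageE)
  then obtain V where "finite V" "K \<subseteq> \<Union>(U ` V)"
    by (metis finite_subset_image)
  then show ?thesis
    using that unfolding U_def by blast
qed

lemma nonneg_if_nonneg_small_perturbation:
  fixes a b :: real
  assumes "\<And>t. 0 < t \<Longrightarrow> t < 1 \<Longrightarrow> 0 \<le> a + t * b"
  shows "0 \<le> a"
proof (rule tendsto_lowerbound)
  show "((\<lambda>t. a + t * b) \<longlongrightarrow> a) (at_right 0)"
    by (auto intro!: tendsto_eq_intros)
  show "\<forall>\<^sub>F t in at_right 0. 0 \<le> a + t * b"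
    using eventually_at_right_real[OF zero_less_one] by eventually_elim (use assms in auto)
qed simp

lemma sum_squares_minimizer_inequality:
  fixes K :: "('a::real_normed_vector \<Rightarrow>\<^sub>L real) set"
  assumes "convex K" "f \<in> K" "c \<in> K"
    and min: "\<And>c. c \<in> K \<Longrightarrow> (\<Sum>v\<in>V. (blinfun_apply f v)\<^sup>2) \<le> (\<Sum>v\<in>V. (blinfun_apply c v)\<^sup>2)"
  shows "(\<Sum>v\<in>V. (blinfun_apply f v)\<^sup>2) \<le> (\<Sum>v\<in>V. blinfun_apply f v * blinfun_apply c v)"
proof -
  define P where "P = (\<Sum>v\<in>V. blinfun_apply f v * (blinfun_apply c v - blinfun_apply f v))"
  define Q where "Q = (\<Sum>v\<in>V. (blinfun_apply c v - blinfun_apply f v)\<^sup>2)"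
  have "0 \<le> 2 * P + t * Q" if t: "0 < t" "t < 1" for t
  proof -
    have expand: "(\<Sum>v\<in>V. (blinfun_apply (f + t *\<^sub>R (c - f)) v)\<^sup>2)
                    = (\<Sum>v\<in>V. (blinfun_apply f v)\<^sup>2) + t * (2 * P + t * Q)"
      by (simp add: P_def Q_def blinfun.add_left blinfun.scaleR_left blinfun.diff_left
          sum_distrib_left sum.distrib[symmetric] power2_eq_square algebra_simps)
    have "f + t *\<^sub>R (c - f) = (1 - t) *\<^sub>R f + t *\<^sub>R c"
      by (simp add: algebra_simps)
    then have "f + t *\<^sub>R (c - f) \<in> K"
      using \<open>convex K\<close> \<open>f \<in> K\<close> \<open>c \<in> K\<close> t by (simp add: convex_def)
    then have "0 \<le> t * (2 * P + t * Q)"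
      using min expand by fastforce
    then show ?thesis using t by (simp add: zero_le_mult_iff)
  qed
  then have "0 \<le> 2 * P"
    by (rule nonneg_if_nonneg_small_perturbation)
  then show ?thesis
    by (simp add: P_def algebra_simps sum_subtractf power2_eq_square)
qed

lemma weak_star_compact_convex_strict_separation:
  fixes K :: "('a::real_normed_vector \<Rightarrow>\<^sub>L real) set"
  assumes K: "compactin weak_star_topology K" and "convex K" and "0 \<notin> K"
  obtains v0 where "\<And>c. c \<in> K \<Longrightarrow> blinfun_apply c v0 < 0"
proof (cases "K = {}")
  case False
  obtain V where V: "finite V" "\<And>c. c \<in> K \<Longrightarrow> \<exists>v\<in>V. blinfun_apply c v \<noteq> 0"
    using compactin_weak_star_finite_nonvanishing[OF K \<open>0 \<notin> K\<close>] by blast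
  define q where "q c = (\<Sum>v\<in>V. (blinfun_apply c v)\<^sup>2)" for c :: "'a \<Rightarrow>\<^sub>L real"
  have q: "continuous_map weak_star_topology euclideanreal q"
    unfolding q_def[abs_def] power2_eq_square
    by (intro continuous_map_sum V continuous_map_real_mult continuous_map_weak_star_evaluation)
  then have "compact (q ` K)"
    using image_compactin[OF K q] by simp
  then obtain f where f: "f \<in> K" "\<And>c. c \<in> K \<Longrightarrow> q f \<le> q c"
    using compact_attains_inf[of "q ` K"] False by auto
  have "q f > 0"
  proof -
    obtain v where "v \<in> V" "blinfun_apply f v \<noteq> 0" using V f by blast
    then have "0 < (blinfun_apply f v)\<^sup>2" by simp
    also have "\<dots> \<le> q f" unfolding q_def
      by (rule member_le_sum[OF \<open>v \<in> V\<close> _ V(1)]) simp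
    finally show ?thesis .
  qed
  show ?thesis
  proof
    fix c assume "c \<in> K"
    have "q f \<le> (\<Sum>v\<in>V. blinfun_apply f v * blinfun_apply c v)"
      using sum_squares_minimizer_inequality[OF \<open>convex K\<close> f(1) \<open>c \<in> K\<close>] f(2)
      unfolding q_def by blast
    moreover have "blinfun_apply c (- (\<Sum>v\<in>V. blinfun_apply f v *\<^sub>R v))
                     = - (\<Sum>v\<in>V. blinfun_apply f v * blinfun_apply c v)"
      by (simp add: blinfun.minus_right blinfun.sum_right blinfun.scaleR_right mult.commute)
    ultimately show "blinfun_apply c (- (\<Sum>v\<in>V. blinfun_apply f v *\<^sub>R v)) < 0"
      using \<open>q f > 0\<close> by simp
  qed
qed auto

lemma convex_hull_translates_strict_separation:
  fixes D :: "'i \<Rightarrow> ('a::real_normed_vector \<Rightarrow>\<^sub>L real) set"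
  assumes "finite A" and D: "\<And>j. j \<in> A \<Longrightarrow> convex (D j) \<and> D j \<noteq> {} \<and> weak_star_compact (D j)"
    and "0 \<notin> convex hull (\<Union>j\<in>A. (\<lambda>a. a + z j) ` D j)"
  obtains v0 where "\<And>j a. j \<in> A \<Longrightarrow> a \<in> D j \<Longrightarrow> blinfun_apply a v0 + blinfun_apply (z j) v0 < 0"
proof -
  define C where "C j = (\<lambda>a. a + z j) ` D j" for j
  have "convex (C j) \<and> C j \<noteq> {} \<and> compactin weak_star_topology (C j)" if "j \<in> A" for j
  proof -
    have "C j = (+) (z j) ` D j"
      unfolding C_def by (simp add: add.commute)
    then show ?thesis
      using D[OF that] weak_star_compact_translation[of "D j" "z j"]
      unfolding C_def weak_star_compact_def by (metis convex_translation image_is_empty)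
  qed
  then have "compactin weak_star_topology (convex hull (\<Union>j\<in>A. C j))"
    by (intro compactin_weak_star_convex_hull_finite_Union \<open>finite A\<close>)
  moreover have "0 \<notin> convex hull (\<Union>j\<in>A. C j)"
    using assms(3) unfolding C_def .
  ultimately obtain v0 where v0: "\<And>c. c \<in> convex hull (\<Union>j\<in>A. C j) \<Longrightarrow> blinfun_apply c v0 < 0"
    using weak_star_compact_convex_strict_separation convex_convex_hull by blast
  have "blinfun_apply a v0 + blinfun_apply (z j) v0 < 0" if "j \<in> A" "a \<in> D j" for j a
  proof -
    have "a + z j \<in> convex hull (\<Union>j\<in>A. C j)"
      using that hull_subset unfolding C_def by fastforce
    then show ?thesis
      using v0 by (fastforce simp: blinfun.add_left)
  qed
  then show ?thesis
    using that by blast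
qed

lemma quasidifferentiable_support_fun_nonpos:
  assumes qd: "quasidifferentiable_with g x Dl Du"
    and s: "support_fun ((\<lambda>a. a + z) ` Dl) v \<le> 0" and "a \<in> Dl"
  shows "blinfun_apply a v + blinfun_apply z v \<le> 0"
proof -
  obtain amax where "\<forall>a'\<in>Dl. blinfun_apply a' v \<le> blinfun_apply amax v"
    using qd unfolding quasidifferentiable_with_def by blast
  then have "bdd_above ((\<lambda>c. blinfun_apply c v) ` (\<lambda>a. a + z) ` Dl)"
    by (intro bdd_aboveI[where M="blinfun_apply amax v + blinfun_apply z v"])
       (auto simp: blinfun.add_left)
  then have "blinfun_apply (a + z) v \<le> support_fun ((\<lambda>a. a + z) ` Dl) v"
    unfolding support_fun_def using \<open>a \<in> Dl\<close> by (intro cSUP_upper) auto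
  then show ?thesis
    using s by (simp add: blinfun.add_left)
qed

lemma quasidifferentiable_dir_deriv_neg:
  assumes qd: "quasidifferentiable_with g x Dl Du" and "z \<in> Du"
    and neg: "\<And>a. a \<in> Dl \<Longrightarrow> blinfun_apply a w + blinfun_apply z w < 0"
  obtains d where "has_dir_deriv g x w d" "d < 0"
proof -
  obtain d a b where d: "has_dir_deriv g x w d" "a \<in> Dl"
    "\<forall>b'\<in>Du. blinfun_apply b w \<le> blinfun_apply b' w" "d = blinfun_apply a w + blinfun_apply b w"
    using qd unfolding quasidifferentiable_with_def by blast
  have "d < 0"
    using d(2-4) neg[of a] \<open>z \<in> Du\<close> by force
  then show ?thesis
    using that d(1) by blast
qed

lemma quasidifferentiable_perturbed_dir_deriv_neg:
  assumes qd: "quasidifferentiable_with g x Dl Du" and "z \<in> Du" and "t > 0"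
    and v: "\<And>a. a \<in> Dl \<Longrightarrow> blinfun_apply a v + blinfun_apply z v \<le> 0"
    and v0: "\<And>a. a \<in> Dl \<Longrightarrow> blinfun_apply a v0 + blinfun_apply z v0 < 0"
  shows "\<exists>d<0. has_dir_deriv g x (v + t *\<^sub>R v0) d"
proof -
  have "blinfun_apply a (v + t *\<^sub>R v0) + blinfun_apply z (v + t *\<^sub>R v0) < 0" if "a \<in> Dl" for a
  proof -
    have "blinfun_apply a (v + t *\<^sub>R v0) + blinfun_apply z (v + t *\<^sub>R v0)
            = (blinfun_apply a v + blinfun_apply z v) + t * (blinfun_apply a v0 + blinfun_apply z v0)"
      by (simp add: blinfun.add_right blinfun.scaleR_right algebra_simps)
    then show ?thesis
      using v[OF that] v0[OF that] \<open>t > 0\<close> by (simp add: add_nonpos_neg mult_pos_neg)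
  qed
  then show ?thesis
    using quasidifferentiable_dir_deriv_neg[OF qd \<open>z \<in> Du\<close>] by blast
qed

lemma has_dir_deriv_neg_eventually_less:
  assumes "has_dir_deriv g x w d" and "d < 0"
  shows "\<forall>\<^sub>F \<alpha> in at_right 0. g (x + \<alpha> *\<^sub>R w) < g x"
proof -
  have "\<forall>\<^sub>F \<alpha> in at_right 0. (g (x + \<alpha> *\<^sub>R w) - g x) / \<alpha> < 0"
    using assms unfolding has_dir_deriv_def by (rule order_tendstoD(2))
  then show ?thesis
    using eventually_at_right_less[of "0::real"]
    by eventually_elim (auto simp: divide_less_0_iff)
qed

lemma upper_semicontinuous_at_eventually_less_along_ray:
  fixes g :: "'a::real_normed_vector \<Rightarrow> real"
  assumes "upper_semicontinuous_at g x" and "g x < c"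
  shows "\<forall>\<^sub>F \<alpha> in at_right 0. g (x + \<alpha> *\<^sub>R w) < c"
proof -
  have "\<forall>\<^sub>F y in at x. g y < g x + (c - g x)"
    using assms unfolding upper_semicontinuous_at_def by (meson diff_gt_0_iff_gt)
  then have "\<forall>\<^sub>F y in nhds x. g y < c"
    using \<open>g x < c\<close> by (simp add: eventually_nhds_conv_at)
  moreover have "((\<lambda>\<alpha>. x + \<alpha> *\<^sub>R w) \<longlongrightarrow> x + 0 *\<^sub>R w) (at_right 0)"
    by (intro tendsto_intros)
  ultimately show ?thesis
    unfolding filterlim_iff by (simp, blast)
qed

lemma eventually_constraint_along_ray:
  fixes g :: "'a::real_normed_vector \<Rightarrow> real"
  assumes "g x \<le> 0"
    and active: "g x = 0 \<Longrightarrow> \<exists>d<0. has_dir_deriv g x w d"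
    and inactive: "g x \<noteq> 0 \<Longrightarrow> upper_semicontinuous_at g x"
  shows "\<forall>\<^sub>F \<alpha> in at_right 0. g (x + \<alpha> *\<^sub>R w) \<le> 0"
proof (cases "g x = 0")
  case True
  then obtain d where "has_dir_deriv g x w d" "d < 0"
    using active by blast
  then show ?thesis
    using has_dir_deriv_neg_eventually_less True by (fastforce elim: eventually_mono)
next
  case False
  with \<open>g x \<le> 0\<close> have "g x < 0" by simp
  then show ?thesis
    using upper_semicontinuous_at_eventually_less_along_ray[OF inactive[OF False], of 0 w]
    by (auto elim: eventually_mono)
qed

lemma contingent_coneI_eventually:
  assumes "w \<longlonglongrightarrow> v" and "\<And>n. \<forall>\<^sub>F \<alpha> in at_right 0. x + \<alpha> *\<^sub>R w n \<in> M"
  shows "v \<in> contingent_cone M x"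
proof -
  have "\<exists>\<alpha>. 0 < \<alpha> \<and> \<alpha> < inverse (real (Suc n)) \<and> x + \<alpha> *\<^sub>R w n \<in> M" for n
  proof -
    have "\<forall>\<^sub>F \<alpha> in at_right (0::real). \<alpha> < inverse (real (Suc n))"
      by (rule order_tendstoD(2)[OF tendsto_ident_at]) simp
    then have "\<forall>\<^sub>F \<alpha> in at_right 0. 0 < \<alpha> \<and> \<alpha> < inverse (real (Suc n)) \<and> x + \<alpha> *\<^sub>R w n \<in> M"
      using eventually_at_right_less[of "0::real"] assms(2)[of n]
      by eventually_elim auto
    then show ?thesis
      using eventually_happens'[OF trivial_limit_at_right_real] by blast
  qed
  then obtain \<alpha> where \<alpha>: "\<And>n. 0 < \<alpha> n" "\<And>n. \<alpha> n < inverse (real (Suc n))"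
    "\<And>n. x + \<alpha> n *\<^sub>R w n \<in> M"
    by metis
  have "\<alpha> \<longlonglongrightarrow> 0"
    by (rule tendsto_sandwich[OF _ _ tendsto_const LIMSEQ_inverse_real_of_nat])
       (use \<alpha> in \<open>auto intro!: always_eventually less_imp_le\<close>)
  then show ?thesis
    unfolding contingent_cone_def using \<alpha> assms(1) by blast
qed

lemma eventually_in_sublevel_sets_along_ray:
  fixes g :: "'i \<Rightarrow> 'a::real_normed_vector \<Rightarrow> real"
  assumes "finite J" and "\<And>j. j \<in> J \<Longrightarrow> g j x \<le> 0"
    and "\<And>j. j \<in> J \<Longrightarrow> g j x = 0 \<Longrightarrow> \<exists>d<0. has_dir_deriv (g j) x w d"
    and "\<And>j. j \<in> J \<Longrightarrow> g j x \<noteq> 0 \<Longrightarrow> upper_semicontinuous_at (g j) x"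
  shows "\<forall>\<^sub>F \<alpha> in at_right 0. x + \<alpha> *\<^sub>R w \<in> {y. \<forall>j\<in>J. g j y \<le> 0}"
  using assms
  by (simp, intro eventually_ball_finite ballI eventually_constraint_along_ray) auto

theorem corollary2:
  fixes g :: "nat \<Rightarrow> 'a::banach \<Rightarrow> real"
    and l :: nat
    and xbar :: 'a
    and Dl Du :: "nat \<Rightarrow> ('a \<Rightarrow>\<^sub>L real) set"
    and z :: "nat \<Rightarrow> ('a \<Rightarrow>\<^sub>L real)"
    and M :: "'a set"
  defines "M \<equiv> {x. \<forall>j\<in>{1..l}. g j x \<le> 0}"
  assumes xbar_M: "xbar \<in> M"
    and qd: "\<And>j. j \<in> {1..l} \<Longrightarrow> g j xbar = 0 \<Longrightarrow> quasidifferentiable_with (g j) xbar (Dl j) (Du j)"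
    and usc: "\<And>j. j \<in> {1..l} \<Longrightarrow> g j xbar \<noteq> 0 \<Longrightarrow> upper_semicontinuous_at (g j) xbar"
    and z_in: "\<And>j. j \<in> {1..l} \<Longrightarrow> g j xbar = 0 \<Longrightarrow> z j \<in> Du j"
    and zero_notin: "0 \<notin> convex hull (\<Union>j\<in>{j\<in>{1..l}. g j xbar = 0}. (\<lambda>a. a + z j) ` Dl j)"
  shows "{v. \<forall>j\<in>{j\<in>{1..l}. g j xbar = 0}. support_fun ((\<lambda>a. a + z j) ` Dl j) v \<le> 0}
           \<subseteq> contingent_cone M xbar"
proof
  define A where "A = {j\<in>{1..l}. g j xbar = 0}"
  have qdA: "quasidifferentiable_with (g j) xbar (Dl j) (Du j)" "z j \<in> Du j" if "j \<in> A" for j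
    using qd z_in that unfolding A_def by auto
  have "convex (Dl j) \<and> Dl j \<noteq> {} \<and> weak_star_compact (Dl j)" if "j \<in> A" for j
    using qdA(1)[OF that] unfolding quasidifferentiable_with_def by blast
  then obtain v0 where v0: "\<And>j a. j \<in> A \<Longrightarrow> a \<in> Dl j \<Longrightarrow> blinfun_apply a v0 + blinfun_apply (z j) v0 < 0"
    using convex_hull_translates_strict_separation[of A Dl z] zero_notin unfolding A_def by auto
  fix v assume "v \<in> {v. \<forall>j\<in>{j\<in>{1..l}. g j xbar = 0}. support_fun ((\<lambda>a. a + z j) ` Dl j) v \<le> 0}"
  then have v: "blinfun_apply a v + blinfun_apply (z j) v \<le> 0" if "j \<in> A" "a \<in> Dl j" for j a
    using quasidifferentiable_support_fun_nonpos[OF qdA(1)] that unfolding A_def by blast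
  define w where "w n = v + inverse (real (Suc n)) *\<^sub>R v0" for n
  have "\<exists>d<0. has_dir_deriv (g j) xbar (w n) d" if "j \<in> A" for j n
    unfolding w_def
    by (rule quasidifferentiable_perturbed_dir_deriv_neg[OF qdA[OF that] _ v[OF that] v0[OF that]]) simp
  then have "\<forall>\<^sub>F \<alpha> in at_right 0. xbar + \<alpha> *\<^sub>R w n \<in> M" for n
    unfolding M_def using xbar_M usc
    by (intro eventually_in_sublevel_sets_along_ray) (auto simp: M_def A_def)
  moreover have "w \<longlonglongrightarrow> v + 0 *\<^sub>R v0"
    unfolding w_def[abs_def] by (intro tendsto_intros LIMSEQ_inverse_real_of_nat)
  ultimately show "v \<in> contingent_cone M xbar"
    by (intro contingent_coneI_eventually) auto
qed

end
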